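(* Let $E$ be an equation in the unknowns $x_1,\dots,x_n$. (1) $\mathcal S_E=0$ if and only if $E$ is trivial. (2) If $\mathcal S_E\ne0$ and $\mathcal S_E(\beta)=0$ for some $\beta\in\mathbb N_0^n$, then $(\beta)_i=0$ for at least two indices $i$.
   Context: An equation is a pair $E=(u,v)$ of words over $\{x_1,\dots,x_n\}$, trivial if $u=v$. For $E=(x_{i_1}\cdots x_{i_r},\,x_{j_1}\cdots x_{j_s})$ define $S_{E,x_j}=\sum_{a:\,i_a=j}\prod_{t=1}^{a-1}X_{i_t}-\sum_{a:\,j_a=j}\prod_{t=1}^{a-1}X_{j_t}\in\mathbb Z[X_1,\dots,X_n]$ (empty product $=1$), $\mathcal S_E=(S_{E,x_1},\dots,S_{E,x_n})$. For $\beta\in\mathbb N_0^n$ and a polynomial $p$, $p(\beta)\in\mathbb Z[x]$ is the image under $X_i\mapsto x^{(\beta)_i}$, and $\mathcal S_E(\beta)=(S_{E,x_1}(\beta),\dots,S_{E,x_n}(\beta))$. *)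

theory Defs
  imports "HOL-Library.Poly_Mapping" "HOL-Computational_Algebra.Polynomial"
begin

(* Unknowns x_1..x_n are represented by the indices 0..n-1 (0-based).
  A word is a list of indices; an equation is a pair of words (u, v).
  Multivariate polynomials in Z[X_0..X_{n-1}] are represented as finitely supported
  maps from monomials (exponent vectors, nat \<Rightarrow>\<^sub>0 nat) to integer coefficients.*)

type_synonym mpoly_int = "(nat \<Rightarrow>\<^sub>0 nat) \<Rightarrow>\<^sub>0 int"

definition word_monom :: "nat list \<Rightarrow> (nat \<Rightarrow>\<^sub>0 nat)" where
  "word_monom w = sum_list (map (\<lambda>x. Poly_Mapping.single x 1) w)"

definition mp_term :: "(nat \<Rightarrow>\<^sub>0 nat) \<Rightarrow> int \<Rightarrow> mpoly_int" where
  "mp_term m c = Poly_Mapping.single m c"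

definition word_part :: "nat list \<Rightarrow> nat \<Rightarrow> mpoly_int" where
  "word_part w j = (\<Sum>a\<in>{a. a < length w \<and> w ! a = j}. mp_term (word_monom (take a w)) 1)"

definition S_comp :: "nat list \<Rightarrow> nat list \<Rightarrow> nat \<Rightarrow> mpoly_int" where
  "S_comp u v j = word_part u j - word_part v j"

definition S_E :: "nat \<Rightarrow> nat list \<Rightarrow> nat list \<Rightarrow> mpoly_int list" where
  "S_E n u v = map (S_comp u v) [0..<n]"

definition eval_at :: "(nat \<Rightarrow> nat) \<Rightarrow> mpoly_int \<Rightarrow> int poly" where
  "eval_at \<beta> p = (\<Sum>m\<in>Poly_Mapping.keys p.
      monom (Poly_Mapping.lookup p m) (\<Sum>i\<in>Poly_Mapping.keys m. Poly_Mapping.lookup m i * \<beta> i))"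

definition S_E_at :: "(nat \<Rightarrow> nat) \<Rightarrow> nat \<Rightarrow> nat list \<Rightarrow> nat list \<Rightarrow> int poly list" where
  "S_E_at \<beta> n u v = map (\<lambda>j. eval_at \<beta> (S_comp u v j)) [0..<n]"

end

theory Submission imports Defs "HOL-Library.Multiset" begin

text \<open>The coefficient of \<open>x^s\<close> in \<open>S\<^sub>E\<^sub>,\<^sub>x\<^sub>j(\<beta>)\<close> is the number of occurrences of \<open>x\<^sub>j\<close> in \<open>u\<close>
  whose prefix has \<open>\<beta>\<close>-weight \<open>s\<close>, minus the same number for \<open>v\<close>. Hence \<open>\<S>\<^sub>E(\<beta>) = 0\<close> says that
  \<open>u\<close> and \<open>v\<close> have the same multiset of pairs (letter, weight of the preceding prefix).
  If at most one letter has weight \<open>0\<close>, this multiset determines the word: the first letters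
  of \<open>u\<close> and \<open>v\<close> both occur with prefix weight \<open>0\<close>, and if they differed each would have to
  occur after a nonempty prefix of weight \<open>0\<close>, i.e. both would have weight \<open>0\<close>. Removing the
  first letter shifts all remaining weights by the same amount, so induction applies.
  Part (1) is the special case \<open>\<beta> = (1,\<dots>,1)\<close>, since \<open>\<S>\<^sub>E = 0\<close> implies \<open>\<S>\<^sub>E(\<beta>) = 0\<close>.\<close>

definition monom_weight :: "(nat \<Rightarrow> nat) \<Rightarrow> (nat \<Rightarrow>\<^sub>0 nat) \<Rightarrow> nat" where
  "monom_weight \<beta> m = (\<Sum>i\<in>Poly_Mapping.keys m. Poly_Mapping.lookup m i * \<beta> i)"

lemma monom_weight_superset:
  "finite K \<Longrightarrow> Poly_Mapping.keys m \<subseteq> K \<Longrightarrow>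
    monom_weight \<beta> m = (\<Sum>i\<in>K. Poly_Mapping.lookup m i * \<beta> i)"
  unfolding monom_weight_def by (rule sum.mono_neutral_left) (auto simp: in_keys_iff)

lemma monom_weight_add: "monom_weight \<beta> (m1 + m2) = monom_weight \<beta> m1 + monom_weight \<beta> m2"
proof -
  let ?K = "Poly_Mapping.keys m1 \<union> Poly_Mapping.keys m2"
  have "monom_weight \<beta> (m1 + m2) = (\<Sum>i\<in>?K. Poly_Mapping.lookup (m1 + m2) i * \<beta> i)"
    using keys_add[of m1 m2] by (intro monom_weight_superset) auto
  also have "\<dots> = (\<Sum>i\<in>?K. Poly_Mapping.lookup m1 i * \<beta> i) + (\<Sum>i\<in>?K. Poly_Mapping.lookup m2 i * \<beta> i)"
    by (simp add: lookup_add sum.distrib algebra_simps)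
  also have "\<dots> = monom_weight \<beta> m1 + monom_weight \<beta> m2"
    by (simp add: monom_weight_superset[symmetric])
  finally show ?thesis .
qed

lemma monom_weight_word_monom: "monom_weight \<beta> (word_monom w) = sum_list (map \<beta> w)"
  by (induction w) (simp_all add: word_monom_def monom_weight_add, simp_all add: monom_weight_def)

lemma eval_at_superset:
  "finite K \<Longrightarrow> Poly_Mapping.keys p \<subseteq> K \<Longrightarrow>
    eval_at \<beta> p = (\<Sum>m\<in>K. monom (Poly_Mapping.lookup p m) (monom_weight \<beta> m))"
  unfolding eval_at_def monom_weight_def by (rule sum.mono_neutral_left) (auto simp: in_keys_iff)

lemma eval_at_add: "eval_at \<beta> (p + q) = eval_at \<beta> p + eval_at \<beta> q"
proof -
  let ?K = "Poly_Mapping.keys p \<union> Poly_Mapping.keys q"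
  let ?ev = "\<lambda>r. \<Sum>m\<in>?K. monom (Poly_Mapping.lookup r m) (monom_weight \<beta> m)"
  have "eval_at \<beta> (p + q) = ?ev (p + q)"
    using keys_add[of p q] by (intro eval_at_superset) auto
  also have "\<dots> = ?ev p + ?ev q"
    by (simp add: lookup_add sum.distrib[symmetric] add_monom)
  also have "\<dots> = eval_at \<beta> p + eval_at \<beta> q"
    by (simp add: eval_at_superset[symmetric])
  finally show ?thesis .
qed

lemma eval_at_zero: "eval_at \<beta> 0 = 0"
  by (simp add: eval_at_def)

lemma eval_at_diff: "eval_at \<beta> (p - q) = eval_at \<beta> p - eval_at \<beta> q"
  using eval_at_add[of \<beta> q "p - q"] by simp

lemma eval_at_sum: "eval_at \<beta> (\<Sum>a\<in>A. f a) = (\<Sum>a\<in>A. eval_at \<beta> (f a))"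
  by (induction A rule: infinite_finite_induct) (simp_all add: eval_at_zero eval_at_add)

lemma eval_at_mp_term: "eval_at \<beta> (mp_term m 1) = monom 1 (monom_weight \<beta> m)"
  by (simp add: eval_at_def mp_term_def monom_weight_def lookup_single)

lemma coeff_eval_at_word_part:
  "coeff (eval_at \<beta> (word_part w j)) s =
    int (card {a. a < length w \<and> w ! a = j \<and> sum_list (map \<beta> (take a w)) = s})"
proof -
  let ?A = "{a. a < length w \<and> w ! a = j}"
  have "coeff (eval_at \<beta> (word_part w j)) s =
      (\<Sum>a\<in>?A. if sum_list (map \<beta> (take a w)) = s then 1 else 0)"
    by (simp add: word_part_def eval_at_sum eval_at_mp_term monom_weight_word_monom
        coeff_sum coeff_monom eq_commute)
  also have "\<dots> = (\<Sum>a\<in>{a\<in>?A. sum_list (map \<beta> (take a w)) = s}. 1)"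
    by (rule sum.inter_filter[symmetric]) simp
  finally show ?thesis
    by (simp add: conj_assoc)
qed

fun weighted_letters :: "(nat \<Rightarrow> nat) \<Rightarrow> nat list \<Rightarrow> (nat \<times> nat) list" where
  "weighted_letters \<beta> [] = []"
| "weighted_letters \<beta> (x # w) = (x, 0) # map (\<lambda>(j, s). (j, \<beta> x + s)) (weighted_letters \<beta> w)"

lemma weighted_letters_conv_nth:
  "weighted_letters \<beta> w = map (\<lambda>a. (w ! a, sum_list (map \<beta> (take a w)))) [0..<length w]"
  by (induction w) (simp_all add: map_upt_Suc del: upt_Suc)

lemma length_weighted_letters [simp]: "length (weighted_letters \<beta> w) = length w"
  by (simp add: weighted_letters_conv_nth)

lemma count_mset_weighted_letters:
  "count (mset (weighted_letters \<beta> w)) (j, s) =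
    card {a. a < length w \<and> w ! a = j \<and> sum_list (map \<beta> (take a w)) = s}"
proof -
  have "count (mset (weighted_letters \<beta> w)) (j, s) = length (filter ((=) (j, s)) (weighted_letters \<beta> w))"
    by (simp add: count_mset count_list_eq_length_filter)
  also have "\<dots> = card {a. a < length w \<and> (j, s) = weighted_letters \<beta> w ! a}"
    by (simp add: length_filter_conv_card del: weighted_letters.simps)
  also have "\<dots> = card {a. a < length w \<and> w ! a = j \<and> sum_list (map \<beta> (take a w)) = s}"
    by (rule arg_cong[where f = card]) (auto simp: weighted_letters_conv_nth)
  finally show ?thesis .
qed

lemma weighted_letters_eq_Nil_iff [simp]: "weighted_letters \<beta> w = [] \<longleftrightarrow> w = []"
  by (cases w) simp_all

lemma hd_eq_if_mset_weighted_letters_eq: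
  assumes eq: "mset (weighted_letters \<beta> (x # u)) = mset (weighted_letters \<beta> (y # v))"
    and zero_unique: "\<beta> x = 0 \<Longrightarrow> \<beta> y = 0 \<Longrightarrow> x = y"
  shows "x = y"
proof (rule ccontr)
  assume ne: "x \<noteq> y"
  from eq have sets: "set (weighted_letters \<beta> (x # u)) = set (weighted_letters \<beta> (y # v))"
    by (metis set_mset_mset)
  have "(x, 0) \<in> set (weighted_letters \<beta> (x # u))" "(y, 0) \<in> set (weighted_letters \<beta> (y # v))"
    by simp_all
  then have "(x, 0) \<in> set (weighted_letters \<beta> (y # v))" "(y, 0) \<in> set (weighted_letters \<beta> (x # u))"
    by (simp_all only: sets)
  with ne have "\<beta> x = 0" "\<beta> y = 0"
    by auto
  with zero_unique ne show False
    by simp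
qed

lemma eq_if_mset_weighted_letters_eq:
  assumes "mset (weighted_letters \<beta> u) = mset (weighted_letters \<beta> v)"
    and "\<forall>i\<in>set u \<union> set v. \<forall>j\<in>set u \<union> set v. \<beta> i = 0 \<longrightarrow> \<beta> j = 0 \<longrightarrow> i = j"
  shows "u = v"
  using assms
proof (induction u arbitrary: v)
  case Nil
  then show ?case
    by simp
next
  case (Cons x u)
  obtain y v' where v: "v = y # v'"
    using Cons.prems(1) by (cases v) simp_all
  have eq: "mset (weighted_letters \<beta> (x # u)) = mset (weighted_letters \<beta> (y # v'))"
    using Cons.prems(1) unfolding v .
  have zero_unique: "\<forall>i\<in>set (x # u) \<union> set (y # v'). \<forall>j\<in>set (x # u) \<union> set (y # v').
      \<beta> i = 0 \<longrightarrow> \<beta> j = 0 \<longrightarrow> i = j"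
    using Cons.prems(2) unfolding v .
  have xy: "x = y"
    using eq by (rule hd_eq_if_mset_weighted_letters_eq) (rule zero_unique[rule_format]; simp)
  define shift where "shift = (\<lambda>(j::nat, s). (j, \<beta> x + s))"
  have "image_mset shift (mset (weighted_letters \<beta> u)) = image_mset shift (mset (weighted_letters \<beta> v'))"
    using eq by (simp add: xy shift_def)
  moreover have "inj shift"
    by (auto simp: shift_def inj_def)
  ultimately have "mset (weighted_letters \<beta> u) = mset (weighted_letters \<beta> v')"
    by (simp add: inj_eq[OF multiset.inj_map])
  moreover have "\<forall>i\<in>set u \<union> set v'. \<forall>j\<in>set u \<union> set v'. \<beta> i = 0 \<longrightarrow> \<beta> j = 0 \<longrightarrow> i = j"
    using zero_unique by simp
  ultimately have "u = v'"
    by (rule Cons.IH)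
  then show ?case
    by (simp add: v xy)
qed

lemma mset_weighted_letters_eq_if_eval_at_S_comp_eq_0:
  assumes "\<forall>j\<in>set u \<union> set v. eval_at \<beta> (S_comp u v j) = 0"
  shows "mset (weighted_letters \<beta> u) = mset (weighted_letters \<beta> v)"
proof (rule multiset_eqI)
  fix p :: "nat \<times> nat"
  obtain j s where p: "p = (j, s)"
    by (cases p)
  show "count (mset (weighted_letters \<beta> u)) p = count (mset (weighted_letters \<beta> v)) p"
  proof (cases "j \<in> set u \<union> set v")
    case True
    then have "eval_at \<beta> (word_part u j) = eval_at \<beta> (word_part v j)"
      using assms by (simp add: S_comp_def eval_at_diff)
    then have "coeff (eval_at \<beta> (word_part u j)) s = coeff (eval_at \<beta> (word_part v j)) s"
      by simp
    then show ?thesis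
      by (simp add: p count_mset_weighted_letters coeff_eval_at_word_part)
  next
    case False
    have no_occurrence: "{a. a < length w \<and> w ! a = j \<and> sum_list (map \<beta> (take a w)) = s} = {}"
      if "j \<notin> set w" for w
      using that by (auto dest: nth_mem)
    from False show ?thesis
      by (simp add: p count_mset_weighted_letters no_occurrence)
  qed
qed

lemma map_upt_eq_replicate_iff: "map f [0..<n] = replicate n c \<longleftrightarrow> (\<forall>j<n. f j = c)"
  by (auto simp: list_eq_iff_nth_eq)

lemma S_E_self: "S_E n u u = replicate n 0"
  by (simp add: S_E_def S_comp_def map_upt_eq_replicate_iff)

lemma S_E_at_eq_0_if_S_E_eq_0:
  "S_E n u v = replicate n 0 \<Longrightarrow> S_E_at \<beta> n u v = replicate n 0"
  by (simp add: S_E_def S_E_at_def map_upt_eq_replicate_iff eval_at_zero)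

lemma eq_if_S_E_at_eq_0:
  assumes "set u \<subseteq> {..<n}" and "set v \<subseteq> {..<n}"
    and "S_E_at \<beta> n u v = replicate n 0"
    and "\<forall>i<n. \<forall>j<n. \<beta> i = 0 \<longrightarrow> \<beta> j = 0 \<longrightarrow> i = j"
  shows "u = v"
proof (rule eq_if_mset_weighted_letters_eq)
  have letters: "set u \<union> set v \<subseteq> {..<n}"
    using assms(1,2) by blast
  with assms(3) show "mset (weighted_letters \<beta> u) = mset (weighted_letters \<beta> v)"
    by (intro mset_weighted_letters_eq_if_eval_at_S_comp_eq_0)
      (auto simp: S_E_at_def map_upt_eq_replicate_iff)
  from letters assms(4)
  show "\<forall>i\<in>set u \<union> set v. \<forall>j\<in>set u \<union> set v. \<beta> i = 0 \<longrightarrow> \<beta> j = 0 \<longrightarrow> i = j"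
    by blast
qed

theorem lemma3p1:
  fixes n :: nat and u v :: "nat list"
  assumes "set u \<subseteq> {..<n}" and "set v \<subseteq> {..<n}"
  shows "(S_E n u v = replicate n 0 \<longleftrightarrow> u = v) \<and>
         (\<forall>\<beta> :: nat \<Rightarrow> nat. S_E n u v \<noteq> replicate n 0 \<and> S_E_at \<beta> n u v = replicate n 0 \<longrightarrow>
           (\<exists>i j. i < n \<and> j < n \<and> i \<noteq> j \<and> \<beta> i = 0 \<and> \<beta> j = 0))"
proof -
  have trivial_iff: "S_E n u v = replicate n 0 \<longleftrightarrow> u = v"
  proof
    assume "S_E n u v = replicate n 0"
    then have "S_E_at (\<lambda>_. 1) n u v = replicate n 0"
      by (rule S_E_at_eq_0_if_S_E_eq_0)
    with assms show "u = v"
      by (rule eq_if_S_E_at_eq_0) simp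
  qed (simp add: S_E_self)
  moreover have "\<exists>i j. i < n \<and> j < n \<and> i \<noteq> j \<and> \<beta> i = 0 \<and> \<beta> j = 0"
    if "S_E n u v \<noteq> replicate n 0" and "S_E_at \<beta> n u v = replicate n 0" for \<beta>
    using eq_if_S_E_at_eq_0[OF assms that(2)] that(1) trivial_iff by blast
  ultimately show ?thesis
    by blast
qed

end
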